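(* Fix two positive integers $b$ and $k$. Then the proportion of points $(r,s)\in\mathbb{N}\times\mathbb{N}$ with $\gcd_b(r,s)=k$ is $\dfrac{1}{k^{b+1}\zeta(b+1)}$; that is, \[ \lim_{N\to\infty}\frac{|\{(r,s): 0<r,s\le N,\ \gcd_b(r,s)=k\}|}{N^2}=\frac{1}{k^{b+1}\zeta(b+1)}, \] where $\zeta$ is the Riemann zeta function.
   Context: For $b\in\mathbb{N}$ and $r,s\in\mathbb{N}$, $\gcd_b(r,s)=\max\{k\in\mathbb{N} : k\mid r \text{ and } k^b\mid s\}$. *)

theory Defs
  imports "HOL-Analysis.Analysis"
begin

definition gcd_b :: "nat \<Rightarrow> nat \<Rightarrow> nat \<Rightarrow> nat" where
  "gcd_b b r s = (GREATEST k. k dvd r \<and> k ^ b dvd s)"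

definition riemann_zeta_real :: "real \<Rightarrow> real" where
  "riemann_zeta_real s = (\<Sum>n. 1 / (real (Suc n)) powr s)"

end

theory Submission
  imports Defs "HOL-Computational_Algebra.Squarefree"
begin

text \<open>
  Call \<open>m\<close> a common b-divisor of \<open>(r, s)\<close> if \<open>m dvd r\<close> and \<open>m ^ b dvd s\<close>; these are exactly
  the divisors of \<open>gcd_b b r s\<close>. M\<ouml>bius inversion over them gives
  \<open>#{(r, s) \<in> [1, N]\<^sup>2. gcd_b b r s = k} = \<Sum>\<^sub>d \<mu>(d) \<lfloor>N / dk\<rfloor> \<lfloor>N / (dk)^b\<rfloor>\<close>, and since the
  \<open>d\<close>-th term is at most \<open>N\<^sup>2 / d\<^sup>2\<close>, Tannery's theorem yields the density
  \<open>(\<Sum>\<^sub>d \<mu>(d) / d^(b+1)) / k^(b+1)\<close>.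

  The constant is identified as \<open>1 / \<zeta>(b+1)\<close> without Dirichlet convolution: every pair has some
  \<open>gcd_b\<close>, so the densities of all values \<open>k\<close> sum to 1, and a second application of Tannery's
  theorem, with the bound \<open>#{gcd_b = k} \<le> \<lfloor>N / k\<rfloor> \<lfloor>N / k^b\<rfloor> \<le> N\<^sup>2 / k\<^sup>2\<close>, moves the limit
  inside the sum over \<open>k\<close>.
\<close>

section \<open>Greatest common b-divisors\<close>

lemma lcm_power:
  fixes a b :: "'a::semiring_gcd_mult_normalize"
  shows "lcm (a ^ n) (b ^ n) = lcm a b ^ n"
proof (cases "a = 0 \<or> b = 0")
  case True
  then show ?thesis by (cases n) auto
next
  case False
  then have "gcd a b ^ n \<noteq> 0" by simp
  have "lcm (a ^ n) (b ^ n) * gcd a b ^ n = normalize (a ^ n * b ^ n)"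
    using lcm_gcd_prod[of "a ^ n" "b ^ n"] by simp
  also have "\<dots> = lcm a b ^ n * gcd a b ^ n"
    by (simp add: lcm_gcd_prod normalize_mult normalize_power flip: power_mult_distrib)
  finally show ?thesis using \<open>gcd a b ^ n \<noteq> 0\<close> by (metis mult_right_cancel)
qed

lemma gcd_b_dvd:
  fixes r s :: nat
  assumes "r > 0"
  shows "gcd_b b r s dvd r" and "gcd_b b r s ^ b dvd s"
proof -
  have "gcd_b b r s dvd r \<and> gcd_b b r s ^ b dvd s"
    unfolding gcd_b_def by (rule GreatestI_nat[of _ 1 r]) (use assms in \<open>auto dest: dvd_imp_le\<close>)
  then show "gcd_b b r s dvd r" and "gcd_b b r s ^ b dvd s" by auto
qed

lemma gcd_b_greatest:
  fixes r s :: nat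
  assumes "r > 0" "m dvd r" "m ^ b dvd s"
  shows "m \<le> gcd_b b r s"
  unfolding gcd_b_def using assms by (intro Greatest_le_nat[of _ _ r]) (auto dest: dvd_imp_le)

lemma gcd_b_pos: "r > 0 \<Longrightarrow> gcd_b b r s > 0"
  using gcd_b_dvd(1)[of r b s] by (auto intro: Nat.gr0I)

lemma gcd_b_le: "r > 0 \<Longrightarrow> gcd_b b r s \<le> r"
  using gcd_b_dvd(1)[of r b s] by (simp add: dvd_imp_le)

text \<open>The lcm of two common b-divisors is again one.\<close>
lemma dvd_gcd_b_iff:
  fixes r s :: nat
  assumes "r > 0"
  shows "m dvd gcd_b b r s \<longleftrightarrow> m dvd r \<and> m ^ b dvd s"
proof
  assume "m dvd gcd_b b r s"
  then show "m dvd r \<and> m ^ b dvd s"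
    using gcd_b_dvd[OF assms] by (meson dvd_trans dvd_power_same)
next
  let ?g = "gcd_b b r s"
  assume m: "m dvd r \<and> m ^ b dvd s"
  have "lcm m ?g dvd r" and "lcm m ?g ^ b dvd s"
    using m gcd_b_dvd[OF assms] by (simp_all flip: lcm_power)
  then have "lcm m ?g \<le> ?g" by (rule gcd_b_greatest[OF assms])
  moreover have "?g \<le> lcm m ?g"
    using gcd_b_pos[OF assms] m assms by (intro dvd_imp_le) (auto simp: lcm_pos_nat)
  ultimately have "lcm m ?g = ?g" by simp
  then show "m dvd ?g" by (metis dvd_lcm1)
qed

section \<open>The M\<ouml>bius function\<close>

definition moebius_mu :: "nat \<Rightarrow> real" where
  "moebius_mu n = (if squarefree n then (-1) ^ card (prime_factors n) else 0)"

lemma abs_moebius_mu_le: "\<bar>moebius_mu n\<bar> \<le> 1"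
  by (simp add: moebius_mu_def)

lemma prod_prime_factors_squarefree:
  fixes n :: nat
  assumes "squarefree n"
  shows "\<Prod>(prime_factors n) = n"
proof -
  have "n \<noteq> 0" using assms by (metis not_squarefree_0)
  then have "(\<Prod>p\<in>prime_factors n. p ^ multiplicity p n) = n"
    using prod_prime_factors[of n] by simp
  moreover have "multiplicity p n = 1" if "p \<in> prime_factors n" for p
    using assms that squarefree_factorial_semiring'[OF \<open>n \<noteq> 0\<close>] by blast
  ultimately show ?thesis by simp
qed

lemma squarefree_dvd_iff_prime_factors_subset:
  fixes d e :: nat
  assumes "squarefree d" "e \<noteq> 0"
  shows "d dvd e \<longleftrightarrow> prime_factors d \<subseteq> prime_factors e"
proof
  assume "prime_factors d \<subseteq> prime_factors e"
  show "d dvd e"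
  proof (rule multiplicity_le_imp_dvd)
    show "d \<noteq> 0" using assms(1) by (metis not_squarefree_0)
    fix p :: nat assume "prime p"
    show "multiplicity p d \<le> multiplicity p e"
    proof (cases "p \<in> prime_factors d")
      case True
      then have "multiplicity p d = 1"
        using assms(1) squarefree_factorial_semiring'[OF \<open>d \<noteq> 0\<close>] by blast
      moreover have "p \<in> prime_factors e" using True \<open>prime_factors d \<subseteq> _\<close> by blast
      ultimately show ?thesis using assms(2) by (simp add: prime_factors_multiplicity)
    qed (use \<open>prime p\<close> in \<open>simp add: prime_factors_multiplicity\<close>)
  qed
qed (use assms(2) dvd_prime_factors in blast)

lemma
  fixes P :: "nat set"
  assumes "finite P" "\<And>p. p \<in> P \<Longrightarrow> prime p"
  shows prime_factors_prod_primes: "prime_factors (\<Prod>P) = P"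
    and squarefree_prod_primes: "squarefree (\<Prod>P)"
proof -
  have "0 \<notin> P" using assms(2) by force
  then show "prime_factors (\<Prod>P) = P"
    using assms by (simp add: prime_factors_prod prime_prime_factors)
  show "squarefree (\<Prod>P)"
    using assms by (intro squarefree_prod_coprime[where f = id, simplified])
      (auto intro: primes_coprime squarefree_prime)
qed

lemma bij_betw_prime_factors_squarefree_divisors:
  fixes e :: nat
  assumes "e \<noteq> 0"
  shows "bij_betw prime_factors {d. d dvd e \<and> squarefree d} (Pow (prime_factors e))"
proof (rule bij_betw_byWitness[where f' = Prod])
  show "\<forall>d\<in>{d. d dvd e \<and> squarefree d}. \<Prod>(prime_factors d) = d"
    by (simp add: prod_prime_factors_squarefree)
  show "\<forall>P\<in>Pow (prime_factors e). prime_factors (\<Prod>P) = P"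
    by (auto intro!: prime_factors_prod_primes intro: finite_subset)
  show "prime_factors ` {d. d dvd e \<and> squarefree d} \<subseteq> Pow (prime_factors e)"
    using assms dvd_prime_factors by blast
  show "Prod ` Pow (prime_factors e) \<subseteq> {d. d dvd e \<and> squarefree d}"
  proof clarify
    fix P assume P: "P \<subseteq> prime_factors e"
    then have "finite P" "\<And>p. p \<in> P \<Longrightarrow> prime p" by (auto intro: finite_subset)
    then show "\<Prod>P dvd e \<and> squarefree (\<Prod>P)"
      using P assms by (simp add: squarefree_dvd_iff_prime_factors_subset
          squarefree_prod_primes prime_factors_prod_primes)
  qed
qed

lemma sum_Pow_neg_one_power_card:
  assumes "finite S"
  shows "(\<Sum>T\<in>Pow S. (-1) ^ card T) = (if S = {} then 1 else (0::'a::ring_1))"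
proof (cases "S = {}")
  case False
  then have "card {T. T \<subseteq> S \<and> even (card T)} = card {T. T \<subseteq> S \<and> odd (card T)}"
    using card_subsupersets_even_odd[of S "{}"] assms by auto
  then have "card {T. T \<in> Pow S \<and> even (card T)} = card {T. T \<in> Pow S \<and> odd (card T)}"
    by simp
  then show ?thesis
    using sum_alternating_cancels[of "Pow S" card] assms False by simp
qed simp

lemma sum_moebius_mu_divisors:
  fixes e :: nat
  assumes "e > 0"
  shows "(\<Sum>d | d dvd e. moebius_mu d) = (if e = 1 then 1 else 0)"
proof -
  have "(\<Sum>d | d dvd e. moebius_mu d)
      = (\<Sum>d | d dvd e \<and> squarefree d. (-1) ^ card (prime_factors d))"
    using assms unfolding moebius_mu_def by (intro sum.mono_neutral_cong_right) auto
  also have "\<dots> = (\<Sum>P\<in>Pow (prime_factors e). (-1) ^ card P)"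
    using bij_betw_prime_factors_squarefree_divisors assms
    by (intro sum.reindex_bij_betw) auto
  also have "\<dots> = (if e = 1 then 1 else 0)"
    using assms by (simp add: sum_Pow_neg_one_power_card prime_factorization_empty_iff)
  finally show ?thesis .
qed

section \<open>Counting pairs with a given greatest common b-divisor\<close>

definition gcd_b_count :: "nat \<Rightarrow> nat \<Rightarrow> nat \<Rightarrow> nat" where
  "gcd_b_count b k N = card {(r, s). r \<in> {1..N} \<and> s \<in> {1..N} \<and> gcd_b b r s = k}"

lemma card_multiples_atLeastAtMost: "card {r \<in> {1..N}. m dvd r} = N div m"
proof (cases "m = 0")
  case False
  then have "{r \<in> {1..N}. m dvd r} = (\<lambda>q. m * q) ` {1..N div m}"
    by (auto simp: less_eq_div_iff_mult_less_eq mult.commute elim!: dvdE)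
  then show ?thesis using False by (simp add: card_image inj_on_def)
qed simp

lemma of_bool_gcd_b_eq_moebius_sum:
  fixes r s N k :: nat
  assumes "0 < r" "r \<le> N" "0 < k"
  shows "of_bool (gcd_b b r s = k)
    = (\<Sum>d=1..N. moebius_mu d * of_bool (d * k dvd r \<and> (d * k) ^ b dvd s))"
proof -
  let ?g = "gcd_b b r s"
  have "(\<Sum>d=1..N. moebius_mu d * of_bool (d * k dvd r \<and> (d * k) ^ b dvd s))
      = (\<Sum>d=1..N. moebius_mu d * of_bool (d * k dvd ?g))"
    using assms(1) by (simp add: dvd_gcd_b_iff)
  also have "\<dots> = of_bool (?g = k)"
  proof (cases "k dvd ?g")
    case False
    then have "\<not> d * k dvd ?g" for d by (meson dvd_mult_right)
    then show ?thesis using False by auto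
  next
    case True
    then obtain e where e: "?g = k * e" ..
    have "0 < e" using gcd_b_pos[OF assms(1), of b s] e by simp
    have "e \<le> k * e" using assms(3) by simp
    also have "\<dots> \<le> r" using gcd_b_le[OF assms(1), of b s] e by simp
    finally have "e \<le> N" using assms(2) by simp
    have "d \<in> {1..N}" if "d dvd e" for d
      using dvd_imp_le[OF that \<open>0 < e\<close>] \<open>0 < e\<close> \<open>e \<le> N\<close> that by (auto intro: Nat.gr0I)
    then have "{1..N} \<inter> {d. d dvd e} = {d. d dvd e}" by blast
    then have "(\<Sum>d=1..N. moebius_mu d * of_bool (d * k dvd ?g)) = (\<Sum>d | d dvd e. moebius_mu d)"
      using e assms(3) by (simp add: mult.commute[of _ k])
    also have "\<dots> = of_bool (?g = k)"
      using sum_moebius_mu_divisors[OF \<open>0 < e\<close>] e assms(3) by simp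
    finally show ?thesis .
  qed
  finally show ?thesis ..
qed

lemma gcd_b_count_moebius:
  assumes "k > 0"
  shows "real (gcd_b_count b k N)
    = (\<Sum>d=1..N. moebius_mu d * real (N div (d * k)) * real (N div (d * k) ^ b))"
proof -
  have "{1..N} \<times> {1..N} \<inter> {(r, s). gcd_b b r s = k}
      = {(r, s). r \<in> {1..N} \<and> s \<in> {1..N} \<and> gcd_b b r s = k}" by auto
  then have "real (gcd_b_count b k N)
      = (\<Sum>p\<in>{1..N} \<times> {1..N}. of_bool (p \<in> {(r, s). gcd_b b r s = k}))"
    unfolding gcd_b_count_def by (subst sum_of_bool_eq) auto
  also have "\<dots> = (\<Sum>r=1..N. \<Sum>s=1..N. of_bool (gcd_b b r s = k))"
    by (simp add: sum.cartesian_product split_def del: sum_of_bool_eq)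
  also have "\<dots> = (\<Sum>r=1..N. \<Sum>s=1..N. \<Sum>d=1..N.
      moebius_mu d * (of_bool (d * k dvd r) * of_bool ((d * k) ^ b dvd s)))"
  proof (intro sum.cong refl)
    fix r s assume "r \<in> {1..N}"
    then show "of_bool (gcd_b b r s = k) = (\<Sum>d=1..N.
        moebius_mu d * (of_bool (d * k dvd r) * of_bool ((d * k) ^ b dvd s)))"
      using of_bool_gcd_b_eq_moebius_sum[of r N k b s] assms by (simp add: of_bool_conj)
  qed
  also have "\<dots> = (\<Sum>r=1..N. \<Sum>d=1..N. \<Sum>s=1..N.
      moebius_mu d * (of_bool (d * k dvd r) * of_bool ((d * k) ^ b dvd s)))"
    by (intro sum.cong refl sum.swap)
  also have "\<dots> = (\<Sum>d=1..N. \<Sum>r=1..N. \<Sum>s=1..N.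
      moebius_mu d * (of_bool (d * k dvd r) * of_bool ((d * k) ^ b dvd s)))"
    by (rule sum.swap)
  also have "\<dots> = (\<Sum>d=1..N. moebius_mu d *
      ((\<Sum>r=1..N. of_bool (d * k dvd r)) * (\<Sum>s=1..N. of_bool ((d * k) ^ b dvd s))))"
    by (intro sum.cong refl) (subst sum_product, simp only: sum_distrib_left)
  also have "\<dots> = (\<Sum>d=1..N. moebius_mu d * real (N div (d * k)) * real (N div (d * k) ^ b))"
    using card_multiples_atLeastAtMost[of N] by (simp add: Int_def mult.assoc)
  finally show ?thesis .
qed

lemma gcd_b_count_eq_0:
  assumes "N < k"
  shows "gcd_b_count b k N = 0"
proof -
  have "gcd_b b r s \<noteq> k" if "r \<in> {1..N}" for r s
    using gcd_b_le[of r b s] that assms by auto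
  then have "{(r, s). r \<in> {1..N} \<and> s \<in> {1..N} \<and> gcd_b b r s = k} = {}" by blast
  then show ?thesis unfolding gcd_b_count_def by (simp only: card.empty)
qed

lemma gcd_b_count_le: "gcd_b_count b k N \<le> (N div k) * (N div k ^ b)"
proof -
  have "k dvd r \<and> k ^ b dvd s" if "r \<in> {1..N}" "gcd_b b r s = k" for r s
    using gcd_b_dvd[of r b s] that by auto
  then have "{(r, s). r \<in> {1..N} \<and> s \<in> {1..N} \<and> gcd_b b r s = k}
      \<subseteq> {r \<in> {1..N}. k dvd r} \<times> {s \<in> {1..N}. k ^ b dvd s}"
    by blast
  then have "gcd_b_count b k N \<le> card ({r \<in> {1..N}. k dvd r} \<times> {s \<in> {1..N}. k ^ b dvd s})"
    unfolding gcd_b_count_def by (intro card_mono) auto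
  then show ?thesis by (simp only: card_cartesian_product card_multiples_atLeastAtMost)
qed

lemma sum_gcd_b_count: "(\<Sum>k=1..N. gcd_b_count b k N) = N ^ 2"
proof -
  let ?S = "\<lambda>k. {(r, s). r \<in> {1..N} \<and> s \<in> {1..N} \<and> gcd_b b r s = k}"
  have "gcd_b b r s \<in> {1..N}" if "r \<in> {1..N}" for r s
    using gcd_b_pos[of r b s] gcd_b_le[of r b s] that by auto
  then have "(\<Union>k\<in>{1..N}. ?S k) = {1..N} \<times> {1..N}" by blast
  moreover have "card (\<Union>k\<in>{1..N}. ?S k) = (\<Sum>k=1..N. card (?S k))"
    by (intro card_UN_disjoint) (auto intro: finite_subset[of _ "{1..N} \<times> {1..N}"])
  ultimately show ?thesis
    unfolding gcd_b_count_def by (simp add: power2_eq_square)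
qed

section \<open>Densities\<close>

lemma suminf_Suc_eq_sum_atLeastAtMost:
  fixes f :: "nat \<Rightarrow> 'a::{t2_space,comm_monoid_add}"
  assumes "\<And>d. N < d \<Longrightarrow> f d = 0"
  shows "(\<Sum>d. f (Suc d)) = (\<Sum>d=1..N. f d)"
proof -
  have "(\<Sum>d. f (Suc d)) = (\<Sum>d<N. f (Suc d))"
    by (rule suminf_finite) (auto simp: assms)
  then show ?thesis by (simp add: sum_bounds_lt_plus1)
qed

lemma of_nat_div_over_le: "real (N div m) / real N \<le> 1 / real m"
proof (cases "N = 0")
  case False
  have "real (N div m) / real N \<le> real N / real m / real N"
    by (intro divide_right_mono of_nat_div_le_of_nat) simp
  then show ?thesis using False by simp
qed simp

lemma tendsto_of_nat_div_over:
  assumes "m > 0"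
  shows "(\<lambda>N. real (N div m) / real N) \<longlonglongrightarrow> 1 / real m"
proof (rule real_tendsto_sandwich)
  have "real N / real m - 1 \<le> real (N div m)" for N
  proof -
    have "real (N mod m) / real m \<le> 1"
      using mod_less_divisor[OF assms, of N] assms by simp
    then show ?thesis using of_nat_of_nat_div_aux[of N m, where 'a = real] by linarith
  qed
  then have "1 / real m - 1 / real N \<le> real (N div m) / real N" if "N > 0" for N
    using divide_right_mono[of "real N / real m - 1" "real (N div m)" "real N"] that
    by (simp add: diff_divide_distrib)
  then show "\<forall>\<^sub>F N in sequentially. 1 / real m - 1 / real N \<le> real (N div m) / real N"
    using eventually_gt_at_top[of "0::nat"] by (rule eventually_mono[rotated])
  show "\<forall>\<^sub>F N in sequentially. real (N div m) / real N \<le> 1 / real m"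
    by (simp add: of_nat_div_over_le)
  show "(\<lambda>N. 1 / real m - 1 / real N) \<longlonglongrightarrow> 1 / real m"
    using tendsto_diff[OF tendsto_const lim_1_over_n, of "1 / real m"] by simp
qed simp

lemma div_times_div_over_square_le:
  assumes "0 < j" "j \<le> m" "j \<le> m'"
  shows "real (N div m) * real (N div m') / real N ^ 2 \<le> 1 / real j ^ 2"
proof -
  have "1 / real m \<le> 1 / real j" "1 / real m' \<le> 1 / real j"
    using assms by (auto intro!: divide_left_mono)
  then have "real (N div m) / real N \<le> 1 / real j" "real (N div m') / real N \<le> 1 / real j"
    using of_nat_div_over_le[of N m] of_nat_div_over_le[of N m'] by linarith+
  then have "real (N div m) / real N * (real (N div m') / real N) \<le> 1 / real j * (1 / real j)"
    by (intro mult_mono) auto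
  then show ?thesis by (simp add: power2_eq_square)
qed

lemma tendsto_suminf_dominated:
  fixes a :: "nat \<Rightarrow> nat \<Rightarrow> real"
  assumes "\<And>k. (\<lambda>N. a k N) \<longlonglongrightarrow> l k" and "\<And>k N. \<bar>a k N\<bar> \<le> M k" and "summable M"
  shows "(\<lambda>N. \<Sum>k. a k N) \<longlonglongrightarrow> (\<Sum>k. l k)"
  using tannerys_theorem[OF assms(1) _ assms(3)] assms(2) by (simp add: always_eventually)

lemma summable_zeta_series: "2 \<le> n \<Longrightarrow> summable (\<lambda>d. 1 / real (Suc d) ^ n)"
  using inverse_power_summable[of n, where 'a = real] summable_Suc_iff[of "\<lambda>d. 1 / real d ^ n"]
  by (simp add: divide_inverse)

lemma riemann_zeta_real_of_nat: "riemann_zeta_real (real n) = (\<Sum>d. 1 / real (Suc d) ^ n)"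
  unfolding riemann_zeta_real_def by (simp add: powr_realpow)

definition moebius_series :: "nat \<Rightarrow> real" where
  "moebius_series n = (\<Sum>d. moebius_mu (Suc d) / real (Suc d) ^ n)"

lemma summable_moebius_series: "2 \<le> n \<Longrightarrow> summable (\<lambda>d. moebius_mu (Suc d) / real (Suc d) ^ n)"
  by (rule summable_comparison_test'[OF summable_zeta_series])
    (auto simp: abs_divide abs_moebius_mu_le divide_right_mono)

lemma gcd_b_count_over_square_eq_suminf:
  assumes "k > 0"
  shows "real (gcd_b_count b k N) / real N ^ 2 = (\<Sum>d. moebius_mu (Suc d) *
    (real (N div (Suc d * k)) * real (N div (Suc d * k) ^ b) / real N ^ 2))"
proof -
  have "(\<Sum>d. moebius_mu (Suc d) *
      (real (N div (Suc d * k)) * real (N div (Suc d * k) ^ b) / real N ^ 2))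
    = (\<Sum>d=1..N. moebius_mu d * (real (N div (d * k)) * real (N div (d * k) ^ b) / real N ^ 2))"
  proof (intro suminf_Suc_eq_sum_atLeastAtMost)
    fix d assume "N < d"
    also have "d \<le> d * k" using assms by simp
    finally show "moebius_mu d * (real (N div (d * k)) * real (N div (d * k) ^ b) / real N ^ 2) = 0"
      by simp
  qed
  then show ?thesis
    using gcd_b_count_moebius[OF assms] by (simp add: sum_divide_distrib mult.assoc)
qed

lemma tendsto_gcd_b_density:
  assumes "b > 0" "k > 0"
  shows "(\<lambda>N. real (gcd_b_count b k N) / real N ^ 2)
    \<longlonglongrightarrow> moebius_series (b + 1) / real k ^ (b + 1)"
proof -
  define a where "a d N = moebius_mu (Suc d) *
    (real (N div (Suc d * k)) * real (N div (Suc d * k) ^ b) / real N ^ 2)" for d N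
  have "(\<lambda>N. a d N) \<longlonglongrightarrow> moebius_mu (Suc d) / real (Suc d) ^ (b + 1) / real k ^ (b + 1)" for d
  proof -
    let ?m = "Suc d * k"
    have "(\<lambda>N. real (N div ?m) / real N * (real (N div ?m ^ b) / real N))
        \<longlonglongrightarrow> 1 / real ?m * (1 / real (?m ^ b))"
      using assms by (intro tendsto_mult tendsto_of_nat_div_over) auto
    then have "(\<lambda>N. a d N) \<longlonglongrightarrow> moebius_mu (Suc d) * (1 / real ?m * (1 / real (?m ^ b)))"
      unfolding a_def power2_eq_square times_divide_times_eq by (rule tendsto_mult_left)
    moreover have "real ?m * real (?m ^ b) = real (Suc d) ^ (b + 1) * real k ^ (b + 1)"
      by (simp only: of_nat_mult of_nat_power power_mult_distrib power_add power_one_right mult_ac)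
    ultimately show ?thesis by simp
  qed
  moreover have "\<bar>a d N\<bar> \<le> 1 / real (Suc d) ^ 2" for d N
  proof -
    define x where "x = real (N div (Suc d * k)) * real (N div (Suc d * k) ^ b) / real N ^ 2"
    have "Suc d \<le> Suc d * k" using mult_le_mono2[of 1 k "Suc d"] assms(2) by simp
    moreover have "Suc d * k \<le> (Suc d * k) ^ b" using assms by (simp add: self_le_power)
    ultimately have x_le: "x \<le> 1 / real (Suc d) ^ 2"
      unfolding x_def by (intro div_times_div_over_square_le) auto
    have "0 \<le> x" unfolding x_def by simp
    then have "\<bar>a d N\<bar> \<le> x"
      unfolding a_def x_def[symmetric] abs_mult abs_of_nonneg[OF \<open>0 \<le> x\<close>]
      using abs_moebius_mu_le[of "Suc d"] by (intro mult_left_le_one_le) auto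
    with x_le show ?thesis by linarith
  qed
  ultimately have "(\<lambda>N. real (gcd_b_count b k N) / real N ^ 2)
      \<longlonglongrightarrow> (\<Sum>d. moebius_mu (Suc d) / real (Suc d) ^ (b + 1) / real k ^ (b + 1))"
    unfolding gcd_b_count_over_square_eq_suminf[OF assms(2)] a_def[symmetric]
    by (rule tendsto_suminf_dominated[OF _ _ summable_zeta_series]) simp
  also have "(\<Sum>d. moebius_mu (Suc d) / real (Suc d) ^ (b + 1) / real k ^ (b + 1))
      = moebius_series (b + 1) / real k ^ (b + 1)"
    unfolding moebius_series_def using assms(1) by (intro suminf_divide summable_moebius_series) simp
  finally show ?thesis .
qed

lemma suminf_gcd_b_count_over_square:
  assumes "N > 0"
  shows "(\<Sum>k. real (gcd_b_count b (Suc k) N) / real N ^ 2) = 1"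
proof -
  have "(\<Sum>k. real (gcd_b_count b (Suc k) N) / real N ^ 2)
      = (\<Sum>k=1..N. real (gcd_b_count b k N)) / real N ^ 2"
    unfolding sum_divide_distrib
    by (intro suminf_Suc_eq_sum_atLeastAtMost) (simp add: gcd_b_count_eq_0)
  also have "\<dots> = 1"
    using sum_gcd_b_count[of b N] assms by (simp flip: of_nat_sum)
  finally show ?thesis .
qed

lemma gcd_b_count_over_square_le:
  assumes "b > 0" "k > 0"
  shows "real (gcd_b_count b k N) / real N ^ 2 \<le> 1 / real k ^ 2"
proof -
  have "real (gcd_b_count b k N) / real N ^ 2 \<le> real (N div k) * real (N div k ^ b) / real N ^ 2"
    using gcd_b_count_le[of b k N] by (intro divide_right_mono) (simp_all flip: of_nat_mult)
  also have "\<dots> \<le> 1 / real k ^ 2"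
    using assms by (intro div_times_div_over_square_le) (simp_all add: self_le_power)
  finally show ?thesis .
qed

lemma moebius_series_times_zeta:
  assumes "b > 0"
  shows "moebius_series (b + 1) * riemann_zeta_real (real (b + 1)) = 1"
proof -
  define a where "a k N = real (gcd_b_count b (Suc k) N) / real N ^ 2" for k N
  have "(\<lambda>N. \<Sum>k. a k N) \<longlonglongrightarrow> 1"
    unfolding a_def using suminf_gcd_b_count_over_square
    by (intro tendsto_eventually eventually_mono[OF eventually_gt_at_top[of 0]])
  moreover have "(\<lambda>N. \<Sum>k. a k N)
      \<longlonglongrightarrow> (\<Sum>k. moebius_series (b + 1) * (1 / real (Suc k) ^ (b + 1)))"
  proof (rule tendsto_suminf_dominated[OF _ _ summable_zeta_series[of 2]])
    show "(\<lambda>N. a k N) \<longlonglongrightarrow> moebius_series (b + 1) * (1 / real (Suc k) ^ (b + 1))" for k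
      unfolding a_def using tendsto_gcd_b_density[OF assms, of "Suc k"] by simp
    show "\<bar>a k N\<bar> \<le> 1 / real (Suc k) ^ 2" for k N
      unfolding a_def using gcd_b_count_over_square_le[OF assms, of "Suc k" N] by simp
  qed simp
  ultimately have "(\<Sum>k. moebius_series (b + 1) * (1 / real (Suc k) ^ (b + 1))) = 1"
    by (rule LIMSEQ_unique[rotated])
  moreover have "(\<Sum>k. moebius_series (b + 1) * (1 / real (Suc k) ^ (b + 1)))
      = moebius_series (b + 1) * riemann_zeta_real (real (b + 1))"
    unfolding riemann_zeta_real_of_nat using assms by (intro suminf_mult summable_zeta_series) simp
  ultimately show ?thesis by simp
qed

theorem mainTheorem2:
  fixes b k :: nat
  assumes "b > 0" and "k > 0"
  shows "(\<lambda>N. real (card {(r, s). r \<in> {1..N} \<and> s \<in> {1..N} \<and> gcd_b b r s = k})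
            / (real N)^2)
         \<longlonglongrightarrow> 1 / ((real k) ^ (b + 1) * riemann_zeta_real (real (b + 1)))"
proof -
  have "moebius_series (b + 1) = 1 / riemann_zeta_real (real (b + 1))"
    using moebius_series_times_zeta[OF assms(1)] by (auto simp: eq_divide_eq)
  then show ?thesis
    using tendsto_gcd_b_density[OF assms] by (simp add: gcd_b_count_def mult_ac)
qed

end
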